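(* Let $C_{\vec B}$ be a Cantor set with scale factor $N$ and digit set $D$. Let $D_1,\dots,D_k$ be all the $2$-element subsets of $\{0,1,\dots,N-1\}$, and let $\vec B_1,\dots,\vec B_k$ be the associated binary digit vectors of length $N$. Then for any choice of irrational numbers $x_i\in C_{\vec B_i}$, $i=1,\dots,k$, we have $$D=\bigcup_{i\in A}D_i,\qquad\text{where } A=\{i : F_{\vec B}(x_i)\notin\mathbb Q\}.$$ In particular $D$ is uniquely determined by $\{(x_i,F_{\vec B}(x_i))\}_{i=1}^k$.
   Context: A Cantor set is specified by an integer scale factor $N\ge3$ and a digit set $D\subset\{0,\dots,N-1\}$ with $2\le|D|\le N-1$; equivalently by the binary digit vector $\vec B=(b_0,\dots,b_{N-1})$ with $b_i=1$ iff $i\in D$, $\|\vec B\|=|D|$. With $\phi_d(x)=(x+d)/N$ for $d\in D$, $C_{\vec B}\subset[0,1]$ is the unique nonempty compact set with $C_{\vec B}=\bigcup_{d\in D}\phi_d(C_{\vec B})$, and $\mu_{\vec B}$ is the unique Borel probability measure with $\mu_{\vec B}=\frac{1}{\|\vec B\|}\sum_{d\in D}\mu_{\vec B}\circ\phi_d^{-1}$. The CDF is $F_{\vec B}(x)=\mu_{\vec B}([0,x])$, $x\in[0,1]$. *)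

theory Defs
  imports "HOL-Probability.Probability"
begin

text \<open>Cantor set with scale factor N and digit set D (the digit set D is the
  set of indices i with b_i = 1 in the binary digit vector B).\<close>

definition cantor_map :: "nat \<Rightarrow> nat \<Rightarrow> real \<Rightarrow> real" where
  "cantor_map N d x = (x + real d) / real N"

definition cantor_set :: "nat \<Rightarrow> nat set \<Rightarrow> real set" where
  "cantor_set N D = (THE C. C \<noteq> {} \<and> compact C \<and> C = (\<Union>d\<in>D. cantor_map N d ` C))"

definition cantor_measure :: "nat \<Rightarrow> nat set \<Rightarrow> real measure" where
  "cantor_measure N D = (THE \<mu>. prob_space \<mu> \<and> sets \<mu> = sets borel \<and>
     (\<forall>A\<in>sets borel. measure \<mu> A =
        (\<Sum>d\<in>D. measure \<mu> (cantor_map N d -` A)) / real (card D)))"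

definition cantor_cdf :: "nat \<Rightarrow> nat set \<Rightarrow> real \<Rightarrow> real" where
  "cantor_cdf N D x = measure (cantor_measure N D) {0..x}"

definition valid_digits :: "nat \<Rightarrow> nat set \<Rightarrow> bool" where
  "valid_digits N D \<longleftrightarrow> 3 \<le> N \<and> D \<subseteq> {..<N} \<and> 2 \<le> card D \<and> card D \<le> N - 1"

end

theory Submission
  imports Defs
begin

text \<open>
  Write \<open>T y = frac (N y)\<close> for the base-\<open>N\<close> shift and \<open>a\<close> for the first digit of
  \<open>y \<in> [0,1)\<close>. Splitting \<open>[0, y]\<close> along the first-level pieces of the Cantor measure gives
  \<open>F y = (#{d \<in> D. d < a} + [a \<in> D] F (T y)) / |D|\<close>. If some digit of \<open>y\<close> lies outside
  \<open>D\<close>, this recursion stops after finitely many steps and \<open>F y\<close> is rational. If all digits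
  lie in \<open>D\<close>, the ranks of the digits within \<open>D\<close> form a base-\<open>|D|\<close> expansion of
  \<open>F y\<close>, so a rational value would make the digits of \<open>y\<close> eventually periodic and \<open>y\<close>
  rational. An irrational point of the Cantor set with digit set \<open>{a, b}\<close> uses both
  digits, hence \<open>F (x S)\<close> is irrational iff \<open>S \<subseteq> D\<close>, and \<open>D\<close> is the union of its
  two-element subsets.

  The defining descriptions of the attractor and of the measure are made concrete through
  the coding map \<open>\<omega> \<mapsto> \<Sum>k. \<omega>\<^sub>k / N\<^sup>k\<^sup>+\<^sup>1\<close>: the attractor is the closure of its image
  on digit streams, the measure is the image of the uniform product measure, and both are
  singled out by uniqueness (contraction for the set, a supremum argument on the difference
  of two distribution functions for the measure).
\<close>

lemma two_le_card_obtains_distinct: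
  assumes "2 \<le> card A"
  obtains a b where "a \<in> A" "b \<in> A" "a \<noteq> b"
proof -
  obtain a B where "A = insert a B" "a \<notin> B" "1 \<le> card B"
    using assms card_le_Suc_iff[of 1 A] by (auto simp: numeral_2_eq_2)
  then obtain b where "b \<in> B" by fastforce
  show thesis by (rule that[of a b]) (use \<open>A = insert a B\<close> \<open>a \<notin> B\<close> \<open>b \<in> B\<close> in auto)
qed

lemma Union_two_element_subsets:
  assumes "2 \<le> card D"
  shows "\<Union>{S. S \<subseteq> D \<and> card S = 2} = D"
proof (intro subset_antisym subsetI)
  fix d assume "d \<in> D"
  obtain a b where "a \<in> D" "b \<in> D" "a \<noteq> b" using two_le_card_obtains_distinct[OF assms] .
  then obtain e where "e \<in> D" "e \<noteq> d" by metis
  then have "{d, e} \<subseteq> D \<and> card {d, e} = 2" using \<open>d \<in> D\<close> by auto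
  then show "d \<in> \<Union>{S. S \<subseteq> D \<and> card S = 2}" by blast
qed blast

lemma inj_on_card_less:
  fixes D :: "'a :: linorder set"
  assumes "finite D"
  shows "inj_on (\<lambda>a. card {d\<in>D. d < a}) D"
proof (rule linorder_inj_onI)
  fix a b assume "a < b" "a \<in> D" "b \<in> D"
  then have "{d\<in>D. d < a} \<subset> {d\<in>D. d < b}" by auto
  then have "card {d\<in>D. d < a} < card {d\<in>D. d < b}"
    using assms by (intro psubset_card_mono) auto
  then show "card {d\<in>D. d < a} \<noteq> card {d\<in>D. d < b}" by simp
qed (meson linear)

lemma abs_mean_near_bound_imp_each_near:
  fixes g :: "'a \<Rightarrow> real"
  assumes "finite D" "d \<in> D" "\<And>e. e \<in> D \<Longrightarrow> \<bar>g e\<bar> \<le> s"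
    and "real (card D) * s - \<delta> < \<bar>\<Sum>e\<in>D. g e\<bar>"
  shows "s - \<delta> < \<bar>g d\<bar>"
proof -
  have card: "real (card D) * s = real (card (D - {d})) * s + s"
    using card.remove[OF assms(1,2)] by (simp add: distrib_right)
  have "\<bar>\<Sum>e\<in>D. g e\<bar> \<le> (\<Sum>e\<in>D. \<bar>g e\<bar>)" by (rule sum_abs)
  also have "\<dots> = \<bar>g d\<bar> + (\<Sum>e\<in>D - {d}. \<bar>g e\<bar>)" by (rule sum.remove[OF assms(1,2)])
  also have "(\<Sum>e\<in>D - {d}. \<bar>g e\<bar>) \<le> (\<Sum>e\<in>D - {d}. s)" by (rule sum_mono) (simp add: assms(3))
  also have "(\<Sum>e\<in>D - {d}. s) = real (card (D - {d})) * s" by simp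
  finally show ?thesis using assms(4) card by linarith
qed

lemma bounded_expansion_eq_0:
  fixes c :: real
  assumes "N \<ge> 2" "\<And>i. \<bar>real N ^ i * c\<bar> \<le> 1"
  shows "c = 0"
proof (rule ccontr)
  assume "c \<noteq> 0"
  obtain i where "1 / \<bar>c\<bar> < real N ^ i"
    using real_arch_pow[of "real N" "1 / \<bar>c\<bar>"] assms(1) by auto
  then have "1 < real N ^ i * \<bar>c\<bar>"
    using \<open>c \<noteq> 0\<close> by (simp add: divide_less_eq)
  then show False using assms(2)[of i] by (simp add: abs_mult)
qed

section \<open>The attractor\<close>

definition hutchinson :: "nat \<Rightarrow> nat set \<Rightarrow> real set \<Rightarrow> real set" where
  "hutchinson N S A = (\<Union>d\<in>S. cantor_map N d ` A)"

definition is_attractor :: "nat \<Rightarrow> nat set \<Rightarrow> real set \<Rightarrow> bool" where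
  "is_attractor N S C \<longleftrightarrow> C \<noteq> {} \<and> compact C \<and> C = hutchinson N S C"

text \<open>Digits are clipped at \<open>N - 1\<close> only so that the coding map is bounded on all streams;
  on streams with digits in \<open>{..<N}\<close> the clipping does nothing.\<close>

definition coding_map :: "nat \<Rightarrow> nat stream \<Rightarrow> real" where
  "coding_map N \<omega> = (\<Sum>k. real (min (\<omega> !! k) (N - 1)) / real N ^ Suc k)"

lemma continuous_on_cantor_map: "continuous_on A (cantor_map N d)"
  unfolding cantor_map_def divide_inverse by (intro continuous_intros)

lemma cantor_map_measurable [measurable]: "cantor_map N d \<in> borel_measurable borel"
  by (intro borel_measurable_continuous_onI continuous_on_cantor_map)

lemma compact_hutchinson: "finite S \<Longrightarrow> compact A \<Longrightarrow> compact (hutchinson N S A)"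
  unfolding hutchinson_def by (intro compact_UN compact_continuous_image continuous_on_cantor_map)

lemma hutchinson_mono: "A \<subseteq> B \<Longrightarrow> hutchinson N S A \<subseteq> hutchinson N S B"
  unfolding hutchinson_def by blast

lemma geometric_digit_sums:
  assumes "N \<ge> 2"
  shows "(\<lambda>k. (real N - 1) / real N ^ Suc k) sums 1"
proof -
  have "(\<lambda>k. (1 / real N) ^ k) sums (1 / (1 - 1 / real N))"
    using assms by (intro geometric_sums) auto
  from sums_mult[OF this, of "(real N - 1) / real N"] show ?thesis
    using assms by (simp add: field_simps power_one_over)
qed

lemma coding_map_sums:
  assumes "N \<ge> 2"
  shows "(\<lambda>k. real (min (\<omega> !! k) (N - 1)) / real N ^ Suc k) sums coding_map N \<omega>"
    and "0 \<le> coding_map N \<omega>" and "coding_map N \<omega> \<le> 1"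
proof -
  have term_le: "real (min (\<omega> !! k) (N - 1)) / real N ^ Suc k \<le> (real N - 1) / real N ^ Suc k" for k
  proof (rule divide_right_mono)
    show "real (min (\<omega> !! k) (N - 1)) \<le> real N - 1" using assms by (simp add: of_nat_diff)
  qed simp
  have "summable (\<lambda>k. real (min (\<omega> !! k) (N - 1)) / real N ^ Suc k)"
    by (rule summable_comparison_test'[where N = 0, OF sums_summable[OF geometric_digit_sums[OF assms]]])
       (simp only: real_norm_def abs_divide power_abs abs_of_nat term_le)
  then show "(\<lambda>k. real (min (\<omega> !! k) (N - 1)) / real N ^ Suc k) sums coding_map N \<omega>"
    unfolding coding_map_def by (rule summable_sums)
  note sums = this
  show "0 \<le> coding_map N \<omega>"
    by (rule sums_le[OF _ sums_zero sums]) simp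
  show "coding_map N \<omega> \<le> 1"
    by (rule sums_le[OF _ sums geometric_digit_sums[OF assms]]) (rule term_le)
qed

lemma coding_map_SCons:
  assumes "N \<ge> 2" "d < N"
  shows "coding_map N (d ## \<omega>) = cantor_map N d (coding_map N \<omega>)"
proof -
  have "(\<lambda>k. real (min ((d ## \<omega>) !! Suc k) (N - 1)) / real N ^ Suc (Suc k))
      sums (coding_map N \<omega> / real N)"
    using sums_divide[OF coding_map_sums(1)[OF assms(1)], where c = "real N"] by (simp add: field_simps)
  from sums_Suc_iff[THEN iffD1, OF this] coding_map_sums(1)[OF assms(1), of "d ## \<omega>"]
  have "coding_map N (d ## \<omega>) = coding_map N \<omega> / real N + real d / real N"
    using assms by (auto simp: sums_iff)
  then show ?thesis by (simp add: cantor_map_def add_divide_distrib)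
qed

lemma hutchinson_coding_image:
  assumes "N \<ge> 2" "S \<subseteq> {..<N}"
  shows "hutchinson N S (coding_map N ` {\<omega>. sset \<omega> \<subseteq> S}) = coding_map N ` {\<omega>. sset \<omega> \<subseteq> S}"
    (is "hutchinson N S ?R = ?R")
proof
  show "hutchinson N S ?R \<subseteq> ?R"
  proof (clarsimp simp: hutchinson_def)
    fix d \<omega> assume "d \<in> S" "sset \<omega> \<subseteq> S"
    then have "cantor_map N d (coding_map N \<omega>) = coding_map N (d ## \<omega>)" "sset (d ## \<omega>) \<subseteq> S"
      using assms by (auto simp: coding_map_SCons)
    then show "cantor_map N d (coding_map N \<omega>) \<in> ?R" by blast
  qed
  show "?R \<subseteq> hutchinson N S ?R"
  proof clarify
    fix \<omega> assume \<omega>: "sset \<omega> \<subseteq> S"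
    then have "shd \<omega> \<in> S" "sset (stl \<omega>) \<subseteq> S"
      by (auto simp: shd_sset stl_sset)
    moreover have "coding_map N \<omega> = cantor_map N (shd \<omega>) (coding_map N (stl \<omega>))"
      using coding_map_SCons[OF assms(1), of "shd \<omega>" "stl \<omega>"] \<open>shd \<omega> \<in> S\<close> assms(2) by auto
    ultimately show "coding_map N \<omega> \<in> hutchinson N S ?R"
      unfolding hutchinson_def by blast
  qed
qed

lemma is_attractor_closure_coding_image:
  assumes "N \<ge> 2" "S \<subseteq> {..<N}" "S \<noteq> {}"
  shows "is_attractor N S (closure (coding_map N ` {\<omega>. sset \<omega> \<subseteq> S}))"
    (is "is_attractor N S (closure ?R)")
proof -
  have fin: "finite S" using assms(2) finite_subset by blast
  have R_eq: "hutchinson N S ?R = ?R" by (rule hutchinson_coding_image[OF assms(1,2)])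
  obtain d where "d \<in> S" using assms(3) by blast
  then have "sconst d \<in> {\<omega>. sset \<omega> \<subseteq> S}" by simp
  then have "coding_map N (sconst d) \<in> ?R" by (rule imageI)
  then have "closure ?R \<noteq> {}" using closure_subset by blast
  moreover have "?R \<subseteq> {0..1}" using coding_map_sums(2,3)[OF assms(1)] by auto
  then have compact: "compact (closure ?R)"
    unfolding compact_closure by (rule bounded_subset[OF bounded_closed_interval])
  moreover have "hutchinson N S (closure ?R) \<subseteq> closure ?R"
    unfolding hutchinson_def
  proof (intro UN_least image_closure_subset continuous_on_cantor_map closed_closure)
    fix d assume "d \<in> S"
    then have "cantor_map N d ` ?R \<subseteq> hutchinson N S ?R"
      unfolding hutchinson_def by (rule UN_upper)
    also have "\<dots> \<subseteq> closure ?R" using R_eq closure_subset by simp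
    finally show "cantor_map N d ` ?R \<subseteq> closure ?R" .
  qed
  moreover have "closure ?R \<subseteq> hutchinson N S (closure ?R)"
  proof (rule closure_minimal)
    show "?R \<subseteq> hutchinson N S (closure ?R)"
      using hutchinson_mono[OF closure_subset[of ?R], of N S] R_eq by simp
    show "closed (hutchinson N S (closure ?R))"
      using fin compact by (intro compact_imp_closed compact_hutchinson)
  qed
  ultimately show ?thesis unfolding is_attractor_def by blast
qed

lemma attractor_approximation:
  assumes "N > 0" "is_attractor N S C1" "is_attractor N S C2"
  obtains B where "\<And>n x. x \<in> C1 \<Longrightarrow> \<exists>z\<in>C2. \<bar>x - z\<bar> \<le> B / real N ^ n"
proof -
  have C1: "C1 \<subseteq> hutchinson N S C1" and C2: "hutchinson N S C2 \<subseteq> C2" "C2 \<noteq> {}"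
    using assms(2,3) unfolding is_attractor_def by auto
  have "bounded (C1 \<union> C2)"
    using assms(2,3) unfolding is_attractor_def by (auto intro: compact_imp_bounded)
  then obtain a where a: "\<And>x. x \<in> C1 \<union> C2 \<Longrightarrow> \<bar>x\<bar> \<le> a"
    unfolding bounded_real by blast
  have "\<exists>z\<in>C2. \<bar>x - z\<bar> \<le> 2 * a / real N ^ n" if "x \<in> C1" for n x
    using that
  proof (induction n arbitrary: x)
    case 0
    obtain z where "z \<in> C2" using C2(2) by blast
    moreover have "\<bar>x - z\<bar> \<le> \<bar>x\<bar> + \<bar>z\<bar>" by (rule abs_triangle_ineq4)
    moreover have "\<bar>x\<bar> \<le> a" "\<bar>z\<bar> \<le> a" using a 0 \<open>z \<in> C2\<close> by auto
    ultimately show ?case by (intro bexI[of _ z]) auto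
  next
    case (Suc n)
    then obtain d y where dy: "d \<in> S" "y \<in> C1" "x = cantor_map N d y"
      using C1 unfolding hutchinson_def by blast
    then obtain z where z: "z \<in> C2" "\<bar>y - z\<bar> \<le> 2 * a / real N ^ n"
      using Suc.IH by blast
    have "cantor_map N d z \<in> C2"
      using C2(1) dy(1) z(1) unfolding hutchinson_def by blast
    moreover have "\<bar>x - cantor_map N d z\<bar> = \<bar>y - z\<bar> / real N"
      using dy(3) assms(1) by (simp add: cantor_map_def diff_divide_distrib[symmetric])
    moreover have "\<bar>y - z\<bar> / real N \<le> 2 * a / real N ^ Suc n"
      using divide_right_mono[OF z(2), of "real N"] by (simp add: divide_divide_eq_left ac_simps)
    ultimately show ?case by (intro bexI[of _ "cantor_map N d z"]) auto
  qed
  then show thesis by (rule that)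
qed

lemma attractor_subset:
  assumes "N \<ge> 2" "is_attractor N S C1" "is_attractor N S C2"
  shows "C1 \<subseteq> C2"
proof
  fix x assume "x \<in> C1"
  obtain B where B: "\<And>n. \<exists>z\<in>C2. \<bar>x - z\<bar> \<le> B / real N ^ n"
    using attractor_approximation[OF _ assms(2,3)] \<open>x \<in> C1\<close> assms(1) by (metis not_numeral_le_zero gr0I)
  have "(\<lambda>n. B * inverse (real N ^ n)) \<longlonglongrightarrow> 0"
    using assms(1) by (intro tendsto_mult_right_zero LIMSEQ_inverse_realpow_zero) simp
  then have small: "\<exists>n. B / real N ^ n < e" if "e > 0" for e
    using order_tendstoD(2)[OF _ that] by (force simp: divide_inverse eventually_sequentially)
  have "closed C2"
    using assms(3) unfolding is_attractor_def by (auto intro: compact_imp_closed)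
  moreover have "\<exists>z\<in>C2. dist z x < e" if e: "e > 0" for e
  proof -
    obtain n where "B / real N ^ n < e" using small[OF e] by blast
    moreover obtain z where "z \<in> C2" "\<bar>x - z\<bar> \<le> B / real N ^ n" using B by blast
    ultimately show ?thesis by (intro bexI[of _ z]) (auto simp: dist_real_def abs_minus_commute)
  qed
  ultimately show "x \<in> C2"
    using closed_approachable by blast
qed

lemma attractor_unique:
  assumes "N \<ge> 2" "is_attractor N S C1" "is_attractor N S C2"
  shows "C1 = C2"
  using attractor_subset[OF assms] attractor_subset[OF assms(1,3,2)] by (rule subset_antisym)

lemma cantor_set_eq_closure_coding_image:
  assumes "N \<ge> 2" "S \<subseteq> {..<N}" "S \<noteq> {}"
  shows "cantor_set N S = closure (coding_map N ` {\<omega>. sset \<omega> \<subseteq> S})"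
  unfolding cantor_set_def
proof (rule the_equality)
  show "closure (coding_map N ` {\<omega>. sset \<omega> \<subseteq> S}) \<noteq> {} \<and>
      compact (closure (coding_map N ` {\<omega>. sset \<omega> \<subseteq> S})) \<and>
      closure (coding_map N ` {\<omega>. sset \<omega> \<subseteq> S}) =
        (\<Union>d\<in>S. cantor_map N d ` closure (coding_map N ` {\<omega>. sset \<omega> \<subseteq> S}))"
    using is_attractor_closure_coding_image[OF assms] unfolding is_attractor_def hutchinson_def .
  fix C assume "C \<noteq> {} \<and> compact C \<and> C = (\<Union>d\<in>S. cantor_map N d ` C)"
  then have "is_attractor N S C" unfolding is_attractor_def hutchinson_def .
  then show "C = closure (coding_map N ` {\<omega>. sset \<omega> \<subseteq> S})"
    using is_attractor_closure_coding_image[OF assms] by (rule attractor_unique[OF assms(1)])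
qed

lemma cantor_set_is_attractor:
  assumes "N \<ge> 2" "S \<subseteq> {..<N}" "S \<noteq> {}"
  shows "is_attractor N S (cantor_set N S)"
  using is_attractor_closure_coding_image[OF assms] cantor_set_eq_closure_coding_image[OF assms] by simp

lemma cantor_set_subset_unit_interval:
  assumes "N \<ge> 2" "S \<subseteq> {..<N}" "S \<noteq> {}"
  shows "cantor_set N S \<subseteq> {0..1}"
  unfolding cantor_set_eq_closure_coding_image[OF assms]
  by (rule closure_minimal) (use coding_map_sums(2,3)[OF assms(1)] in auto)

section \<open>The self-similar measure\<close>

definition digit_streams :: "nat set \<Rightarrow> nat stream measure" where
  "digit_streams D = stream_space (measure_pmf (pmf_of_set D))"

definition cantor_distr :: "nat \<Rightarrow> nat set \<Rightarrow> real measure" where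
  "cantor_distr N D = distr (digit_streams D) borel (coding_map N)"

definition self_similar :: "nat \<Rightarrow> nat set \<Rightarrow> real measure \<Rightarrow> bool" where
  "self_similar N D \<mu> \<longleftrightarrow> prob_space \<mu> \<and> sets \<mu> = sets borel \<and>
     (\<forall>A\<in>sets borel. measure \<mu> A = (\<Sum>d\<in>D. measure \<mu> (cantor_map N d -` A)) / real (card D))"

lemma coding_map_measurable [measurable]:
  "coding_map N \<in> borel_measurable (stream_space (measure_pmf p))"
  unfolding coding_map_def by measurable

lemma prob_space_digit_streams: "finite D \<Longrightarrow> D \<noteq> {} \<Longrightarrow> prob_space (digit_streams D)"
  unfolding digit_streams_def by (rule prob_space.prob_space_stream_space) (rule prob_space_measure_pmf)

lemma sets_cantor_distr [simp]: "sets (cantor_distr N D) = sets borel"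
  by (simp add: cantor_distr_def)

lemma emeasure_cantor_distr:
  assumes "A \<in> sets borel"
  shows "emeasure (cantor_distr N D) A = (\<integral>\<^sup>+\<omega>. indicator A (coding_map N \<omega>) \<partial>digit_streams D)"
proof -
  have "emeasure (cantor_distr N D) A = (\<integral>\<^sup>+x. indicator A x \<partial>cantor_distr N D)"
    using assms by simp
  also have "\<dots> = (\<integral>\<^sup>+\<omega>. indicator A (coding_map N \<omega>) \<partial>digit_streams D)"
    unfolding cantor_distr_def
    by (rule nn_integral_distr) (use assms in \<open>auto simp: digit_streams_def\<close>)
  finally show ?thesis .
qed

lemma emeasure_cantor_distr_self_similar:
  assumes N: "N \<ge> 2" and D: "D \<subseteq> {..<N}" "D \<noteq> {}" and A: "A \<in> sets borel"
  shows "emeasure (cantor_distr N D) A =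
    (\<Sum>d\<in>D. emeasure (cantor_distr N D) (cantor_map N d -` A)) / of_nat (card D)"
proof -
  have fin: "finite D" using D finite_subset by blast
  have digit: "indicator A (coding_map N (d ## \<omega>)) = (indicator (cantor_map N d -` A) (coding_map N \<omega>) :: ennreal)"
    if "d \<in> D" for d \<omega>
    using that D N by (simp add: coding_map_SCons subset_eq indicator_def)
  have "emeasure (cantor_distr N D) A = (\<integral>\<^sup>+\<omega>. indicator A (coding_map N \<omega>) \<partial>digit_streams D)"
    by (rule emeasure_cantor_distr[OF A])
  also have "\<dots> = (\<integral>\<^sup>+d. (\<integral>\<^sup>+\<omega>. indicator A (coding_map N (d ## \<omega>)) \<partial>digit_streams D) \<partial>pmf_of_set D)"
    unfolding digit_streams_def
    by (rule prob_space.nn_integral_stream_space[OF prob_space_measure_pmf]) (use A in measurable)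
  also have "\<dots> = (\<Sum>d\<in>D. (\<integral>\<^sup>+\<omega>. indicator A (coding_map N (d ## \<omega>)) \<partial>digit_streams D)) / of_nat (card D)"
    using fin D(2) by (simp add: nn_integral_pmf_of_set)
  also have "\<dots> = (\<Sum>d\<in>D. emeasure (cantor_distr N D) (cantor_map N d -` A)) / of_nat (card D)"
    using measurable_sets[OF cantor_map_measurable A]
    by (simp add: digit emeasure_cantor_distr cong: sum.cong)
  finally show ?thesis .
qed

lemma self_similar_cantor_distr:
  assumes N: "N \<ge> 2" and D: "D \<subseteq> {..<N}" "D \<noteq> {}"
  shows "self_similar N D (cantor_distr N D)"
proof -
  have fin: "finite D" using D finite_subset by blast
  have card_pos: "real (card D) > 0" using fin D(2) by (simp add: card_gt_0_iff)
  interpret prob_space "cantor_distr N D"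
    unfolding cantor_distr_def
    by (rule prob_space.prob_space_distr[OF prob_space_digit_streams[OF fin D(2)]])
       (simp add: digit_streams_def)
  have "measure (cantor_distr N D) A =
      (\<Sum>d\<in>D. measure (cantor_distr N D) (cantor_map N d -` A)) / real (card D)"
    if A: "A \<in> sets borel" for A
  proof -
    have "ennreal (measure (cantor_distr N D) A) =
        (\<Sum>d\<in>D. ennreal (measure (cantor_distr N D) (cantor_map N d -` A))) / of_nat (card D)"
      using emeasure_cantor_distr_self_similar[OF N D A] by (simp add: emeasure_eq_measure)
    also have "\<dots> = ennreal ((\<Sum>d\<in>D. measure (cantor_distr N D) (cantor_map N d -` A)) / real (card D))"
      using card_pos by (simp add: ennreal_of_nat_eq_real_of_nat divide_ennreal sum_nonneg)
    finally show ?thesis by (simp add: sum_nonneg divide_nonneg_nonneg)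
  qed
  then show ?thesis unfolding self_similar_def using prob_space_axioms by auto
qed

lemma funpow_affine_diff:
  fixes c t :: real
  shows "((\<lambda>z. c * z - t) ^^ k) x - ((\<lambda>z. c * z - t) ^^ k) y = c ^ k * (x - y)"
  by (induction k) (simp_all add: right_diff_distrib[symmetric])

lemma self_similar_near_sup_step:
  fixes H :: "real \<Rightarrow> real"
  assumes D: "finite D" "d \<in> D"
    and H_eq: "H z = (\<Sum>e\<in>D. H (real N * z - real e)) / real (card D)"
    and le_s: "\<And>y. \<bar>H y\<bar> \<le> s"
    and near: "s - s / (2 * real (card D) ^ Suc n) < \<bar>H z\<bar>"
  shows "s - s / (2 * real (card D) ^ n) < \<bar>H (real N * z - real d)\<bar>"
proof (rule abs_mean_near_bound_imp_each_near[where g = "\<lambda>e. H (real N * z - real e)", OF D le_s])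
  have "card D > 0" using D by (auto simp: card_gt_0_iff)
  then have "real (card D) * s - s / (2 * real (card D) ^ n)
      = real (card D) * (s - s / (2 * real (card D) ^ Suc n))"
    by (simp add: field_simps)
  also have "\<dots> < real (card D) * \<bar>H z\<bar>"
    using near \<open>card D > 0\<close> by simp
  also have "\<dots> = \<bar>\<Sum>e\<in>D. H (real N * z - real e)\<bar>"
    using H_eq \<open>card D > 0\<close> by (simp add: abs_mult)
  finally show "real (card D) * s - s / (2 * real (card D) ^ n) < \<bar>\<Sum>e\<in>D. H (real N * z - real e)\<bar>" .
qed

lemma self_similar_function_eq_0:
  fixes H :: "real \<Rightarrow> real"
  assumes N: "N \<ge> 2" and D: "finite D" "a \<in> D" "b \<in> D" "a \<noteq> b"
    and H_eq: "\<And>y. H y = (\<Sum>d\<in>D. H (real N * y - real d)) / real (card D)"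
    and H_bdd: "bdd_above (range (\<lambda>y. \<bar>H y\<bar>))"
    and H_lim: "(H \<longlongrightarrow> 0) at_infinity"
  shows "H y = 0"
proof (rule ccontr)
  assume "H y \<noteq> 0"
  define s where "s = (SUP y. \<bar>H y\<bar>)"
  have le_s: "\<bar>H z\<bar> \<le> s" for z unfolding s_def by (rule cSUP_upper[OF UNIV_I H_bdd])
  have "s > 0" using le_s[of y] \<open>H y \<noteq> 0\<close> by linarith
  have "card D > 0" using D by (auto simp: card_gt_0_iff)
  \<comment> \<open>Points where \<open>|H|\<close> is close to its supremum pass this on to all their children
    \<open>N z - d\<close>. Branching once at digits \<open>a \<noteq> b\<close> and then always following \<open>a\<close> yields two
    such points at distance at least \<open>N\<^sup>k\<close>, while they stay bounded because \<open>H\<close> vanishes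
    at infinity.\<close>
  define near where "near n z \<longleftrightarrow> s - s / (2 * real (card D) ^ n) < \<bar>H z\<bar>" for n z
  note near_Suc = self_similar_near_sup_step[OF D(1) _ H_eq le_s, folded near_def]
  define f where "f z = real N * z - real a" for z
  have near_iter: "near n ((f ^^ k) z)" if "near (n + k) z" for n k z
    using that
  proof (induction k arbitrary: z)
    case (Suc k)
    then have "near (n + k) (f z)" using near_Suc D(2) by (simp add: f_def)
    then show ?case using Suc.IH by (simp add: funpow_Suc_right del: funpow.simps)
  qed simp
  have "eventually (\<lambda>z. \<bar>H z\<bar> < s / 2) at_infinity"
    using tendstoD[OF H_lim, of "s / 2"] \<open>s > 0\<close> by (simp add: dist_real_def)
  then obtain R where R: "\<And>z. R \<le> \<bar>z\<bar> \<Longrightarrow> \<bar>H z\<bar> < s / 2"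
    unfolding eventually_at_infinity real_norm_def by blast
  have near_0_bounded: "\<bar>z\<bar> < R" if "near 0 z" for z
  proof (rule ccontr)
    assume "\<not> \<bar>z\<bar> < R"
    then have "\<bar>H z\<bar> < s / 2" using R by simp
    with that show False unfolding near_def by simp
  qed
  obtain k where k: "2 * R < real N ^ k"
    using real_arch_pow[of "real N" "2 * R"] N by auto
  have "s - s / (2 * real (card D) ^ Suc k) < s"
    using \<open>s > 0\<close> \<open>card D > 0\<close> by simp
  then obtain z where z: "near (Suc k) z"
    unfolding near_def s_def less_cSUP_iff[OF UNIV_not_empty H_bdd] by blast
  define z1 z2 where "z1 = (f ^^ k) (real N * z - real a)" and "z2 = (f ^^ k) (real N * z - real b)"
  have "\<bar>z1\<bar> < R" "\<bar>z2\<bar> < R"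
    unfolding z1_def z2_def using near_iter[of 0 k] near_Suc[OF _ z] near_0_bounded D(2,3) by simp_all
  moreover have "\<bar>z1 - z2\<bar> \<le> \<bar>z1\<bar> + \<bar>z2\<bar>" by (rule abs_triangle_ineq4)
  moreover have "1 \<le> \<bar>real b - real a\<bar>"
    using D(4) by (cases "a < b") auto
  then have "real N ^ k \<le> \<bar>z1 - z2\<bar>"
    unfolding z1_def z2_def f_def using mult_left_mono[of 1 _ "real N ^ k"]
    by (simp add: funpow_affine_diff abs_mult)
  ultimately show False using k by linarith
qed

lemma vimage_cantor_map_atMost:
  "N > 0 \<Longrightarrow> cantor_map N d -` {..y} = {..real N * y - real d}"
  by (auto simp: cantor_map_def divide_le_eq algebra_simps)

lemma self_similar_cdf:
  assumes "self_similar N D \<mu>" "N > 0"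
  shows "cdf \<mu> y = (\<Sum>d\<in>D. cdf \<mu> (real N * y - real d)) / real (card D)"
  using assms unfolding self_similar_def cdf_def by (simp add: vimage_cantor_map_atMost)

lemma self_similar_real_distribution: "self_similar N D \<mu> \<Longrightarrow> real_distribution \<mu>"
  unfolding self_similar_def real_distribution_def real_distribution_axioms_def by simp

lemma self_similar_unique:
  assumes N: "N \<ge> 2" and D: "2 \<le> card D" and \<mu>: "self_similar N D \<mu>" and \<nu>: "self_similar N D \<nu>"
  shows "\<mu> = \<nu>"
proof -
  interpret \<mu>: real_distribution \<mu> using \<mu> by (rule self_similar_real_distribution)
  interpret \<nu>: real_distribution \<nu> using \<nu> by (rule self_similar_real_distribution)
  obtain a b where ab: "a \<in> D" "b \<in> D" "a \<noteq> b" using two_le_card_obtains_distinct[OF D] .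
  have fin: "finite D" using D card.infinite by fastforce
  have N0: "N > 0" using N by simp
  define H where "H y = cdf \<mu> y - cdf \<nu> y" for y
  have "H y = 0" for y
  proof (rule self_similar_function_eq_0[where H = H, OF N fin ab])
    show "H y = (\<Sum>d\<in>D. H (real N * y - real d)) / real (card D)" for y
      unfolding H_def self_similar_cdf[OF \<mu> N0, of y] self_similar_cdf[OF \<nu> N0, of y]
      by (simp add: sum_subtractf diff_divide_distrib)
    have H_le: "\<bar>H y\<bar> \<le> 1" for y
      unfolding H_def using \<mu>.cdf_bounded_prob[of y] \<nu>.cdf_bounded_prob[of y] \<mu>.cdf_nonneg[of y] \<nu>.cdf_nonneg[of y]
      by linarith
    show "bdd_above (range (\<lambda>y. \<bar>H y\<bar>))" by (rule bdd_aboveI2[OF H_le])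
    show "(H \<longlongrightarrow> 0) at_infinity"
      unfolding at_infinity_eq_at_top_bot H_def[abs_def]
      using tendsto_diff[OF \<mu>.cdf_lim_at_top_prob \<nu>.cdf_lim_at_top_prob]
        tendsto_diff[OF \<mu>.cdf_lim_at_bot \<nu>.cdf_lim_at_bot]
      by (intro filterlim_sup) simp_all
  qed
  then have "cdf \<mu> = cdf \<nu>" unfolding H_def by (auto simp: fun_eq_iff)
  then show ?thesis by (rule cdf_unique[OF \<mu>.real_distribution_axioms \<nu>.real_distribution_axioms])
qed

lemma cantor_measure_eq_cantor_distr:
  assumes "N \<ge> 2" "D \<subseteq> {..<N}" "2 \<le> card D"
  shows "cantor_measure N D = cantor_distr N D"
proof -
  have "D \<noteq> {}" using assms(3) by auto
  then have "self_similar N D (cantor_distr N D)"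
    using self_similar_cantor_distr[OF assms(1,2)] by blast
  then have "(THE \<mu>. self_similar N D \<mu>) = cantor_distr N D"
    using self_similar_unique[OF assms(1,3)] by blast
  then show ?thesis unfolding cantor_measure_def self_similar_def .
qed

lemma cdf_cantor_distr_outside_unit_interval:
  assumes "N \<ge> 2" "D \<subseteq> {..<N}" "D \<noteq> {}"
  shows "y < 0 \<Longrightarrow> cdf (cantor_distr N D) y = 0"
    and "1 \<le> y \<Longrightarrow> cdf (cantor_distr N D) y = 1"
proof -
  interpret prob_space "digit_streams D"
    using assms(2,3) by (intro prob_space_digit_streams) (auto intro: finite_subset)
  note coding_bounds = coding_map_sums(2,3)[OF assms(1)]
  show "cdf (cantor_distr N D) y = 0" if "y < 0"
  proof -
    have "\<not> coding_map N \<omega> \<le> y" for \<omega> using coding_bounds(1)[of \<omega>] that by linarith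
    then have "coding_map N -` {..y} \<inter> space (digit_streams D) = {}" by blast
    then show ?thesis unfolding cdf_def cantor_distr_def
      by (subst measure_distr) (auto simp: digit_streams_def)
  qed
  show "cdf (cantor_distr N D) y = 1" if "1 \<le> y"
  proof -
    have "coding_map N \<omega> \<le> y" for \<omega> using coding_bounds(2)[of \<omega>] that by linarith
    then have "coding_map N -` {..y} \<inter> space (digit_streams D) = space (digit_streams D)" by blast
    then show ?thesis unfolding cdf_def cantor_distr_def
      by (subst measure_distr) (auto simp: digit_streams_def prob_space[unfolded digit_streams_def])
  qed
qed

lemma cantor_cdf_eq_cdf:
  assumes "N \<ge> 2" "D \<subseteq> {..<N}" "2 \<le> card D"
  shows "cantor_cdf N D y = cdf (cantor_distr N D) y"
proof -
  have "coding_map N -` {0..y} = coding_map N -` {..y}"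
    using coding_map_sums(2)[OF assms(1)] by auto
  then show ?thesis
    unfolding cantor_cdf_def cdf_def cantor_measure_eq_cantor_distr[OF assms] cantor_distr_def
    by (subst (1 2) measure_distr) (auto simp: digit_streams_def)
qed

section \<open>Base-\<open>N\<close> digits\<close>

definition lead_digit :: "nat \<Rightarrow> real \<Rightarrow> nat" where
  "lead_digit N y = nat \<lfloor>real N * y\<rfloor>"

definition base_shift :: "nat \<Rightarrow> real \<Rightarrow> real" where
  "base_shift N y = frac (real N * y)"

lemma base_shift_bounds: "0 \<le> base_shift N y" "base_shift N y < 1"
  unfolding base_shift_def by (simp_all add: frac_lt_1)

lemma base_shift_eq: "0 \<le> y \<Longrightarrow> base_shift N y = real N * y - real (lead_digit N y)"
  unfolding base_shift_def lead_digit_def frac_def by simp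

lemma base_shift_iterate_eq: "\<exists>z::int. (base_shift N ^^ i) x = real N ^ i * x - of_int z"
proof (induction i)
  case (Suc i)
  then obtain z where z: "(base_shift N ^^ i) x = real N ^ i * x - of_int z" by blast
  have "(base_shift N ^^ Suc i) x = real N ^ Suc i * x - of_int (int N * z + \<lfloor>real N * (base_shift N ^^ i) x\<rfloor>)"
    by (simp add: base_shift_def frac_def z algebra_simps)
  then show ?case by blast
qed (auto intro: exI[of _ 0])

lemma periodic_digits_imp_rational:
  assumes N: "N \<ge> 2" and x: "0 \<le> x" "x \<le> 1" and "j < k"
    and periodic: "\<And>i. lead_digit N ((base_shift N ^^ (j + i)) x) = lead_digit N ((base_shift N ^^ (k + i)) x)"
  shows "x \<in> \<rat>"
proof -
  define xs where "xs i = (base_shift N ^^ i) x" for i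
  have xs_bounds: "0 \<le> xs i \<and> xs i \<le> 1" for i
    using x base_shift_bounds[of N] by (cases i) (auto simp: xs_def less_imp_le)
  have xs_Suc: "xs (Suc i) = real N * xs i - real (lead_digit N (xs i))" for i
    using base_shift_eq xs_bounds[of i] by (simp add: xs_def)
  have same_digit: "lead_digit N (xs (j + i)) = lead_digit N (xs (k + i))" for i
    using periodic unfolding xs_def .
  have "xs (j + i) - xs (k + i) = real N ^ i * (xs j - xs k)" for i
  proof (induction i)
    case (Suc i)
    have "xs (j + Suc i) - xs (k + Suc i) = real N * (xs (j + i) - xs (k + i))"
      using xs_Suc[of "j + i"] xs_Suc[of "k + i"] same_digit[of i] by (simp add: right_diff_distrib)
    then show ?case using Suc.IH by simp
  qed simp
  moreover have "\<bar>xs (j + i) - xs (k + i)\<bar> \<le> 1" for i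
    using xs_bounds[of "j + i"] xs_bounds[of "k + i"] by linarith
  ultimately have "xs j = xs k"
    using bounded_expansion_eq_0[OF N, of "xs j - xs k"] by simp
  moreover obtain zj zk :: int where "xs j = real N ^ j * x - zj" "xs k = real N ^ k * x - zk"
    using base_shift_iterate_eq unfolding xs_def by metis
  moreover have "real N ^ j < real N ^ k"
    using N \<open>j < k\<close> by (intro power_strict_increasing) auto
  ultimately have "x = (of_int zk - of_int zj) / (real N ^ k - real N ^ j)"
    by (simp add: field_simps)
  also have "\<dots> \<in> \<rat>" by (intro Rats_divide Rats_diff Rats_of_int Rats_power Rats_of_nat)
  finally show ?thesis .
qed

section \<open>Expansions of rational numbers\<close>

context
  fixes m :: nat and r :: "nat \<Rightarrow> real" and e :: "nat \<Rightarrow> nat"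
  assumes m_pos: "m > 0"
    and expansion: "\<And>k. r k = (real (e k) + r (Suc k)) / real m"
    and r_bounds: "\<And>k. 0 \<le> r k \<and> r k \<le> 1"
    and e_less: "\<And>k. e k < m"
begin

lemma expansion_Suc: "r (Suc k) = real m * r k - real (e k)"
  using expansion[of k] m_pos by (simp add: field_simps)

lemma expansion_at_one: "r k = 1 \<Longrightarrow> e k = m - 1 \<and> r (Suc k) = 1"
  using expansion_Suc[of k] r_bounds[of "Suc k"] e_less[of k] by (simp add: of_nat_diff)

lemma expansion_stays_at_one: "r k = 1 \<Longrightarrow> r (k + i) = 1 \<and> e (k + i) = m - 1"
  by (induction i) (simp_all add: expansion_at_one)

lemma expansion_below_one:
  assumes "r (Suc k) < 1"
  shows "e k = nat \<lfloor>real m * r k\<rfloor>" "r (Suc k) = frac (real m * r k)"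
proof -
  have "real m * r k = real (e k) + r (Suc k)" using expansion_Suc[of k] by simp
  then have "\<lfloor>real m * r k\<rfloor> = int (e k)"
    using assms r_bounds[of "Suc k"] by (simp add: floor_eq_iff)
  then show "e k = nat \<lfloor>real m * r k\<rfloor>" "r (Suc k) = frac (real m * r k)"
    using expansion_Suc[of k] by (simp_all add: frac_def)
qed

lemma rational_expansion_repeats:
  assumes "r 0 \<in> \<rat>"
  obtains j k where "j < k" "r j = r k"
proof -
  obtain p q where q: "q > 0" "r 0 = of_int p / of_int q"
    using assms by (rule Rats_cases') blast
  have "\<exists>z::int. of_int q * r k = of_int z" for k
  proof (induction k)
    case (Suc k)
    then obtain z where "of_int q * r k = of_int z" by blast
    then have "of_int q * r (Suc k) = of_int (int m * z - q * int (e k))"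
      by (simp add: expansion_Suc algebra_simps)
    then show ?case by blast
  qed (use q in simp)
  then have scaled: "of_int \<lfloor>of_int q * r k\<rfloor> = of_int q * r k" for k
    by (metis floor_of_int)
  have "\<lfloor>of_int q * r k\<rfloor> \<in> {0..q}" for k
  proof -
    have "0 \<le> of_int q * r k" "of_int q * r k \<le> of_int q * 1"
      using r_bounds[of k] q(1) by (simp_all add: mult_left_mono)
    then show ?thesis
      using floor_mono[of 0 "of_int q * r k"] floor_mono[of "of_int q * r k" "of_int q"] by simp
  qed
  then have "range (\<lambda>k. \<lfloor>of_int q * r k\<rfloor>) \<subseteq> {0..q}" by blast
  then have "\<not> inj (\<lambda>k. \<lfloor>of_int q * r k\<rfloor>)"
    using range_inj_infinite finite_subset by blast
  then obtain j k where "j \<noteq> k" "r j = r k"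
    unfolding inj_def using scaled q(1) by (metis mult_cancel_left of_int_eq_0_iff less_irrefl)
  then show thesis
    using that by (cases "j < k") (auto simp: not_less_iff_gr_or_eq)
qed

lemma rational_expansion_eventually_periodic:
  assumes "r 0 \<in> \<rat>"
  obtains j k where "j < k" "\<And>i. e (j + i) = e (k + i)"
  \<comment> \<open>Once \<open>r\<close> reaches \<open>1\<close> all later digits are \<open>m - 1\<close>; otherwise \<open>r\<close> is an orbit
    of \<open>t \<mapsto> frac (m t)\<close>, so a repetition of \<open>r\<close> repeats all later digits.\<close>
proof (cases "\<exists>k. r k = 1")
  case True
  then obtain k where "r k = 1" by blast
  then show thesis
    using expansion_stays_at_one[of k] expansion_stays_at_one[of k "Suc _"]
    by (intro that[of k "Suc k"]) simp_all
next
  case False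
  then have below_one: "r k < 1" for k using r_bounds[of k] by fastforce
  obtain j k where "j < k" "r j = r k" using rational_expansion_repeats[OF assms] .
  have "r (j + i) = r (k + i)" for i
    by (induction i) (simp_all add: \<open>r j = r k\<close> expansion_below_one(2)[OF below_one])
  then have "e (j + i) = e (k + i)" for i
    using expansion_below_one(1)[OF below_one] by metis
  with \<open>j < k\<close> show thesis by (rule that)
qed

end

section \<open>The CDF at irrational points\<close>

definition cdf_recursion :: "nat \<Rightarrow> nat set \<Rightarrow> (real \<Rightarrow> real) \<Rightarrow> bool" where
  "cdf_recursion N D G \<longleftrightarrow> (\<forall>y. 0 \<le> y \<longrightarrow> y < 1 \<longrightarrow>
     G y = (real (card {d\<in>D. d < lead_digit N y}) +
            (if lead_digit N y \<in> D then G (base_shift N y) else 0)) / real (card D))"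

lemma cdf_recursion_rational:
  assumes G: "cdf_recursion N D G" and "0 \<le> y" "y < 1"
    and "lead_digit N ((base_shift N ^^ k) y) \<notin> D"
  shows "G y \<in> \<rat>"
  using assms(2-)
proof (induction k arbitrary: y)
  case 0
  then show ?case using G unfolding cdf_recursion_def by (simp add: Rats_divide)
next
  case (Suc k)
  have "G (base_shift N y) \<in> \<rat>" if "lead_digit N y \<in> D"
    using Suc.IH[of "base_shift N y"] Suc.prems(3) base_shift_bounds
    by (simp add: funpow_Suc_right del: funpow.simps)
  then show ?case
    using G Suc.prems(1,2) unfolding cdf_recursion_def by (simp add: Rats_divide Rats_add)
qed

lemma cdf_recursion_irrational:
  assumes N: "N \<ge> 2" and G: "cdf_recursion N D G" and "finite D"
    and G_bounds: "\<And>y. 0 \<le> G y \<and> G y \<le> 1"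
    and x: "0 \<le> x" "x \<le> 1" "x \<notin> \<rat>"
    and digits: "\<And>k. lead_digit N ((base_shift N ^^ k) x) \<in> D"
  shows "G x \<notin> \<rat>"
proof
  assume "G x \<in> \<rat>"
  define xs where "xs k = (base_shift N ^^ k) x" for k
  define rank where "rank a = card {d\<in>D. d < a}" for a
  have "x < 1" using x by (cases "x = 1") auto
  then have xs_bounds: "0 \<le> xs k" "xs k < 1" for k
    using x(1) base_shift_bounds[of N] by (cases k; simp add: xs_def)+
  have "card D > 0" using digits[of 0] \<open>finite D\<close> by (auto simp: card_gt_0_iff)
  moreover have "G (xs k) = (real (rank (lead_digit N (xs k))) + G (xs (Suc k))) / real (card D)" for k
    using G xs_bounds[of k] digits[of k] unfolding cdf_recursion_def
    by (simp add: xs_def rank_def)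
  moreover have "0 \<le> G (xs k) \<and> G (xs k) \<le> 1" for k by (rule G_bounds)
  moreover have "rank (lead_digit N (xs k)) < card D" for k
    unfolding rank_def using digits[of k] \<open>finite D\<close>
    by (intro psubset_card_mono) (auto simp: xs_def)
  moreover have "G (xs 0) \<in> \<rat>" using \<open>G x \<in> \<rat>\<close> by (simp add: xs_def)
  ultimately obtain j k where "j < k"
    and "\<And>i. rank (lead_digit N (xs (j + i))) = rank (lead_digit N (xs (k + i)))"
    by (rule rational_expansion_eventually_periodic[where r = "\<lambda>k. G (xs k)"]) blast
  then have "lead_digit N (xs (j + i)) = lead_digit N (xs (k + i))" for i
    using inj_on_card_less[OF \<open>finite D\<close>] digits unfolding rank_def inj_on_def xs_def by blast
  then have "x \<in> \<rat>"
    using periodic_digits_imp_rational[OF N x(1,2) \<open>j < k\<close>] unfolding xs_def by blast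
  with x(3) show False by simp
qed

lemma cantor_cdf_recursion:
  assumes N: "N \<ge> 2" and D: "D \<subseteq> {..<N}" "2 \<le> card D"
  shows "cdf_recursion N D (cantor_cdf N D)"
  unfolding cdf_recursion_def
proof (intro allI impI)
  fix y :: real assume y: "0 \<le> y" "y < 1"
  define F where "F = cdf (cantor_distr N D)"
  define a where "a = lead_digit N y"
  have fin: "finite D" and "D \<noteq> {}" using D finite_subset by auto
  have F_eq: "cantor_cdf N D = F" unfolding F_def using cantor_cdf_eq_cdf[OF N D] by auto
  note F_outside = cdf_cantor_distr_outside_unit_interval[OF N D(1) \<open>D \<noteq> {}\<close>, folded F_def]
  have "real a = of_int \<lfloor>real N * y\<rfloor>" using y unfolding a_def lead_digit_def by simp
  then have a_le: "real a \<le> real N * y" and a_gt: "real N * y < real a + 1" by linarith+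
  have term_eq: "F (real N * y - real d) = (if d < a then 1 else 0) + (if d = a then F (base_shift N y) else 0)"
    for d
  proof (cases d a rule: linorder_cases)
    case less
    then show ?thesis using F_outside(2) a_le by simp
  next
    case equal
    then show ?thesis using base_shift_eq[OF y(1)] by (simp add: a_def)
  next
    case greater
    then show ?thesis using F_outside(1) a_gt by simp
  qed
  have "F y = (\<Sum>d\<in>D. F (real N * y - real d)) / real (card D)"
    unfolding F_def using self_similar_cdf self_similar_cantor_distr[OF N D(1) \<open>D \<noteq> {}\<close>] N by simp
  also have "(\<Sum>d\<in>D. F (real N * y - real d)) = real (card {d\<in>D. d < a}) + (if a \<in> D then F (base_shift N y) else 0)"
    using fin by (simp add: term_eq sum.distrib sum.If_cases Int_def)
  finally show "cantor_cdf N D y = (real (card {d\<in>D. d < lead_digit N y}) +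
      (if lead_digit N y \<in> D then cantor_cdf N D (base_shift N y) else 0)) / real (card D)"
    unfolding F_eq a_def .
qed

lemma cantor_set_irrational_shift:
  assumes N: "N \<ge> 2" and S: "S \<subseteq> {..<N}" "S \<noteq> {}"
    and y: "y \<in> cantor_set N S" "y \<notin> \<rat>"
  shows "lead_digit N y \<in> S" "base_shift N y \<in> cantor_set N S" "base_shift N y \<notin> \<rat>"
proof -
  have C: "cantor_set N S = hutchinson N S (cantor_set N S)"
    using cantor_set_is_attractor[OF N S] unfolding is_attractor_def by blast
  obtain d z where dz: "d \<in> S" "z \<in> cantor_set N S" "y = cantor_map N d z"
    using y(1) C unfolding hutchinson_def by blast
  have z_irrational: "z \<notin> \<rat>"
  proof
    assume "z \<in> \<rat>"
    then have "cantor_map N d z \<in> \<rat>" unfolding cantor_map_def by (intro Rats_divide Rats_add Rats_of_nat)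
    then show False using y(2) dz(3) by simp
  qed
  have "0 \<le> z" "z < 1"
    using cantor_set_subset_unit_interval[OF N S] dz(2) z_irrational by (auto simp: less_le)
  moreover have "real N * y = z + real d" using dz(3) N by (simp add: cantor_map_def)
  ultimately have "\<lfloor>real N * y\<rfloor> = int d" by (simp add: floor_eq_iff)
  then have "lead_digit N y = d" "base_shift N y = z"
    using \<open>real N * y = z + real d\<close> by (simp_all add: lead_digit_def base_shift_def frac_def)
  then show "lead_digit N y \<in> S" "base_shift N y \<in> cantor_set N S" "base_shift N y \<notin> \<rat>"
    using dz z_irrational by simp_all
qed

lemma cantor_set_irrational_orbit:
  assumes N: "N \<ge> 2" and S: "S \<subseteq> {..<N}" "S \<noteq> {}"
    and x: "x \<in> cantor_set N S" "x \<notin> \<rat>"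
  shows "(base_shift N ^^ k) x \<in> cantor_set N S \<and> (base_shift N ^^ k) x \<notin> \<rat>"
    and "lead_digit N ((base_shift N ^^ k) x) \<in> S"
proof -
  show orbit: "(base_shift N ^^ k) x \<in> cantor_set N S \<and> (base_shift N ^^ k) x \<notin> \<rat>" for k
    by (induction k) (use x cantor_set_irrational_shift[OF N S] in auto)
  show "lead_digit N ((base_shift N ^^ k) x) \<in> S"
    using orbit[of k] cantor_set_irrational_shift[OF N S] by blast
qed

lemma digits_of_irrational_point_of_pair:
  assumes N: "N \<ge> 2" and S: "S \<subseteq> {..<N}" "card S = 2"
    and x: "x \<in> cantor_set N S" "x \<notin> \<rat>"
  shows "range (\<lambda>k. lead_digit N ((base_shift N ^^ k) x)) = S"
proof -
  have "S \<noteq> {}" using S(2) by auto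
  note digit_in = cantor_set_irrational_orbit(2)[OF N S(1) \<open>S \<noteq> {}\<close> x]
  have x01: "0 \<le> x" "x \<le> 1"
    using cantor_set_subset_unit_interval[OF N S(1) \<open>S \<noteq> {}\<close>] x(1) by auto
  show ?thesis
  proof (rule ccontr)
    assume "range (\<lambda>k. lead_digit N ((base_shift N ^^ k) x)) \<noteq> S"
    then obtain a where a: "a \<in> S" "\<And>k. lead_digit N ((base_shift N ^^ k) x) \<noteq> a"
      using digit_in by blast
    obtain b where "S = {a, b}"
      using S(2) a(1) by (metis card_2_iff insert_commute insertE singletonD)
    then have digit_b: "lead_digit N ((base_shift N ^^ k) x) = b" for k
      using digit_in[of k] a(2)[of k] by blast
    have "x \<in> \<rat>"
      by (rule periodic_digits_imp_rational[OF N x01, of 0 1]) (simp_all only: digit_b zero_less_one)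
    with x(2) show False by simp
  qed
qed

lemma cantor_cdf_irrational_iff_digits_in:
  assumes N: "N \<ge> 2" and D: "D \<subseteq> {..<N}" "2 \<le> card D"
    and x: "0 \<le> x" "x \<le> 1" "x \<notin> \<rat>"
  shows "cantor_cdf N D x \<notin> \<rat> \<longleftrightarrow> (\<forall>k. lead_digit N ((base_shift N ^^ k) x) \<in> D)"
proof
  assume "cantor_cdf N D x \<notin> \<rat>"
  moreover have "x < 1" using x by (auto simp: less_le)
  ultimately show "\<forall>k. lead_digit N ((base_shift N ^^ k) x) \<in> D"
    using cdf_recursion_rational[OF cantor_cdf_recursion[OF N D] x(1)] by blast
next
  assume "\<forall>k. lead_digit N ((base_shift N ^^ k) x) \<in> D"
  moreover have "0 \<le> cantor_cdf N D y \<and> cantor_cdf N D y \<le> 1" for y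
  proof -
    have "D \<noteq> {}" using D(2) by auto
    interpret real_distribution "cantor_distr N D"
      using self_similar_cantor_distr[OF N D(1) \<open>D \<noteq> {}\<close>] by (rule self_similar_real_distribution)
    show ?thesis using cdf_nonneg cdf_bounded_prob by (simp add: cantor_cdf_eq_cdf[OF N D])
  qed
  ultimately show "cantor_cdf N D x \<notin> \<rat>"
    using cdf_recursion_irrational[OF N cantor_cdf_recursion[OF N D] _ _ x] D finite_subset by blast
qed

lemma cantor_cdf_at_pair_point_irrational_iff:
  assumes N: "N \<ge> 2" and D: "D \<subseteq> {..<N}" "2 \<le> card D"
    and S: "S \<subseteq> {..<N}" "card S = 2" and x: "x \<in> cantor_set N S" "x \<notin> \<rat>"
  shows "cantor_cdf N D x \<notin> \<rat> \<longleftrightarrow> S \<subseteq> D"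
proof -
  have "S \<noteq> {}" using S(2) by auto
  have "0 \<le> x" "x \<le> 1"
    using cantor_set_subset_unit_interval[OF N S(1) \<open>S \<noteq> {}\<close>] x(1) by auto
  then show ?thesis
    using cantor_cdf_irrational_iff_digits_in[OF N D _ _ x(2)]
      digits_of_irrational_point_of_pair[OF N S x] by auto
qed

lemma digit_set_from_cdf_values:
  assumes N: "N \<ge> 2" and D: "D \<subseteq> {..<N}" "2 \<le> card D"
    and x: "\<And>S. S \<subseteq> {..<N} \<Longrightarrow> card S = 2 \<Longrightarrow> x S \<in> cantor_set N S \<and> x S \<notin> \<rat>"
  shows "D = \<Union>{S. S \<subseteq> {..<N} \<and> card S = 2 \<and> cantor_cdf N D (x S) \<notin> \<rat>}"
proof -
  have "{S. S \<subseteq> {..<N} \<and> card S = 2 \<and> cantor_cdf N D (x S) \<notin> \<rat>} = {S. S \<subseteq> D \<and> card S = 2}"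
    using cantor_cdf_at_pair_point_irrational_iff[OF N D] x D(1) by blast
  then show ?thesis using Union_two_element_subsets[OF D(2)] by simp
qed

theorem lemma2p13:
  fixes N :: nat and D :: "nat set" and x :: "nat set \<Rightarrow> real"
  assumes "3 \<le> N" and "D \<subseteq> {..<N}" and "2 \<le> card D" and "card D \<le> N - 1"
    and "\<And>S. S \<subseteq> {..<N} \<Longrightarrow> card S = 2 \<Longrightarrow> x S \<in> cantor_set N S \<and> x S \<notin> \<rat>"
  shows "D = \<Union>{S. S \<subseteq> {..<N} \<and> card S = 2 \<and> cantor_cdf N D (x S) \<notin> \<rat>}
    \<and> (\<forall>D'. valid_digits N D' \<longrightarrow>
          (\<forall>S. S \<subseteq> {..<N} \<and> card S = 2 \<longrightarrow> cantor_cdf N D' (x S) = cantor_cdf N D (x S))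
          \<longrightarrow> D' = D)"
proof -
  have N: "N \<ge> 2" using assms(1) by simp
  note recover = digit_set_from_cdf_values[OF N _ _ assms(5)]
  have "D' = D" if "valid_digits N D'"
    and same: "\<forall>S. S \<subseteq> {..<N} \<and> card S = 2 \<longrightarrow> cantor_cdf N D' (x S) = cantor_cdf N D (x S)" for D'
  proof -
    have "D' = \<Union>{S. S \<subseteq> {..<N} \<and> card S = 2 \<and> cantor_cdf N D' (x S) \<notin> \<rat>}"
      using that(1) recover unfolding valid_digits_def by blast
    also have "\<dots> = \<Union>{S. S \<subseteq> {..<N} \<and> card S = 2 \<and> cantor_cdf N D (x S) \<notin> \<rat>}"
      using same by (intro arg_cong[where f = Union] Collect_cong) auto
    also have "\<dots> = D" using recover assms(2,3) by blast
    finally show ?thesis .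
  qed
  then show ?thesis using recover assms(2,3) by blast
qed

end
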